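(* Let $\mathbb{I}=(I_n:n\in\omega)$ and $\mathbb{J}=(J_k:k\in\omega)$ be interval partitions of $\omega$ and $x,y\in 2^\omega$, and suppose $|J_k|\ge 2$ for every $k$. Then the following are equivalent: (1) $\mathrm{Match}(x,\mathbb{I})\not\subseteq\mathrm{Match}(y,\mathbb{J})$; (2) $|\mathrm{Match}(x,\mathbb{I})\setminus\mathrm{Match}(y,\mathbb{J})|=\mathfrak{c}$; (3) there are infinitely many $n$ such that for every $k$, either $J_k\not\subseteq I_n$ or $x\restriction J_k\neq y\restriction J_k$.
   Context: An interval partition of $\omega$ is a sequence of consecutive finite nonempty intervals covering $\omega$. For an interval partition $\mathbb{I}=(I_n)$ and $x\in2^\omega$, $\mathrm{Match}(x,\mathbb{I})=\{y\in 2^\omega : x\restriction I_n=y\restriction I_n \text{ for infinitely many } n\}$. $\mathfrak{c}=2^{\aleph_0}$. *)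

theory Defs
  imports Main "HOL-Library.Equipollence"
begin

definition interval_partition :: "(nat \<Rightarrow> nat set) \<Rightarrow> bool" where
  "interval_partition I \<longleftrightarrow>
     (\<exists>a :: nat \<Rightarrow> nat. a 0 = 0 \<and> strict_mono a \<and> (\<forall>n. I n = {a n..<a (Suc n)}))"

definition Match :: "(nat \<Rightarrow> bool) \<Rightarrow> (nat \<Rightarrow> nat set) \<Rightarrow> (nat \<Rightarrow> bool) set" where
  "Match x I = {y. infinite {n. \<forall>i\<in>I n. x i = y i}}"

end

theory Submission
  imports Defs "HOL-Library.Disjoint_Sets"
begin

text \<open>
  If from some point on every block \<open>I n\<close> contains a whole block \<open>J k\<close> on which \<open>x\<close> and \<open>y\<close>
  agree, then every \<open>z\<close> matching \<open>x\<close> on infinitely many \<open>I n\<close> matches \<open>y\<close> on the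
  corresponding, pairwise distinct, \<open>J k\<close>. Conversely, given infinitely many \<open>n\<close> without such
  a block, pick infinitely many of them, \<open>g 0 < g 1 < \<dots>\<close>, separated by blocks \<open>J (k i)\<close>.
  A point \<open>z\<close> copying \<open>x\<close> on the \<open>I (g i)\<close> and \<open>\<not> y\<close> elsewhere lies in
  \<open>Match x I - Match y J\<close>: a block \<open>J\<close> inside some \<open>I (g i)\<close> sees a disagreement of \<open>x\<close> and \<open>y\<close>,
  any other block meets the complement of \<open>\<Union>i. I (g i)\<close>. Since \<open>|J k| \<ge> 2\<close>, the last point of
  \<open>J (k i)\<close> already disagrees with \<open>y\<close>, so its first point is free to carry the bit \<open>f i\<close> of an
  arbitrary \<open>f \<in> 2\<^sup>\<omega>\<close>; this gives continuum many such \<open>z\<close>.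
\<close>

definition disagreement_blocks ::
    "(nat \<Rightarrow> bool) \<Rightarrow> (nat \<Rightarrow> bool) \<Rightarrow> (nat \<Rightarrow> nat set) \<Rightarrow> (nat \<Rightarrow> nat set) \<Rightarrow> nat set" where
  "disagreement_blocks x y I J = {n. \<forall>k. \<not> J k \<subseteq> I n \<or> (\<exists>i\<in>J k. x i \<noteq> y i)}"

lemma interval_partitionE:
  assumes "interval_partition I"
  obtains a where "strict_mono a" and "I = (\<lambda>n. {a n..<a (Suc n)})"
  using assms unfolding interval_partition_def by blast

lemma strict_mono_block_unique:
  assumes "strict_mono (a :: nat \<Rightarrow> nat)"
    and "p \<in> {a n..<a (Suc n)}" and "p \<in> {a m..<a (Suc m)}"
  shows "n = m"
proof -
  have "a n < a (Suc m)" "a m < a (Suc n)"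
    using assms(2,3) by simp_all
  then have "n < Suc m" "m < Suc n"
    using strict_mono_less[OF assms(1)] by blast+
  then show ?thesis by linarith
qed

lemma interval_partition_disjoint_family:
  assumes "interval_partition I"
  shows "disjoint_family I"
proof -
  obtain a where "strict_mono a" "I = (\<lambda>n. {a n..<a (Suc n)})"
    using assms by (rule interval_partitionE)
  then show ?thesis
    unfolding disjoint_family_on_def by (metis disjoint_iff strict_mono_block_unique)
qed

lemma Match_subset_if_finite_disagreement_blocks:
  assumes disj: "disjoint_family I" and nonempty: "\<And>k. J k \<noteq> {}"
    and fin: "finite (disagreement_blocks x y I J)"
  shows "Match x I \<subseteq> Match y J"
proof
  fix z assume "z \<in> Match x I"
  obtain m where "\<forall>n\<in>disagreement_blocks x y I J. n \<le> m"
    using fin finite_nat_set_iff_bounded_le by blast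
  then have m: "\<exists>k. J k \<subseteq> I n \<and> (\<forall>i\<in>J k. x i = y i)" if "m < n" for n
    using that unfolding disagreement_blocks_def by fastforce
  define S where "S = {n. \<forall>i\<in>I n. x i = z i} - {..m}"
  have "infinite S"
    using \<open>z \<in> Match x I\<close> unfolding S_def Match_def by simp
  have "\<forall>n\<in>S. \<exists>k. J k \<subseteq> I n \<and> (\<forall>i\<in>J k. x i = y i)"
    using m unfolding S_def by simp
  then obtain h where h: "\<forall>n\<in>S. J (h n) \<subseteq> I n \<and> (\<forall>i\<in>J (h n). x i = y i)"
    by (rule bchoice[THEN exE])
  have "inj_on h S"
  proof
    fix n n' assume "n \<in> S" "n' \<in> S" "h n = h n'"
    obtain p where "p \<in> J (h n)" using nonempty by blast
    moreover have "J (h n) \<subseteq> I n" "J (h n') \<subseteq> I n'"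
      using h \<open>n \<in> S\<close> \<open>n' \<in> S\<close> by blast+
    ultimately have "p \<in> I n \<inter> I n'" using \<open>h n = h n'\<close> by auto
    with disj show "n = n'" unfolding disjoint_family_on_def by blast
  qed
  then have "infinite (h ` S)" using \<open>infinite S\<close> finite_imageD by blast
  moreover have "h ` S \<subseteq> {k. \<forall>i\<in>J k. y i = z i}"
  proof clarify
    fix n i assume "n \<in> S" "i \<in> J (h n)"
    with h have "i \<in> I n" "x i = y i" by blast+
    with \<open>n \<in> S\<close> show "y i = z i" unfolding S_def by simp
  qed
  ultimately have "infinite {k. \<forall>i\<in>J k. y i = z i}" by (rule infinite_super[rotated])
  then show "z \<in> Match y J" unfolding Match_def by simp
qed

lemma interleaved_subsequences:
  fixes a b :: "nat \<Rightarrow> nat"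
  assumes mono_a: "strict_mono a" and mono_b: "strict_mono b" and "infinite G"
  obtains g k where "\<And>i. g i \<in> G"
    and "\<And>i. a (Suc (g i)) \<le> b (k i)" and "\<And>i. b (Suc (k i)) \<le> a (g (Suc i))"
proof -
  have "\<forall>m. \<exists>n. n \<in> G \<and> m \<le> a n"
  proof
    fix m
    obtain n where "n \<in> G" "m \<le> n"
      using \<open>infinite G\<close> infinite_nat_iff_unbounded_le by blast
    then show "\<exists>n. n \<in> G \<and> m \<le> a n"
      using strict_mono_imp_increasing[OF mono_a, of n] by auto
  qed
  then obtain nG where nG: "\<forall>m. nG m \<in> G \<and> m \<le> a (nG m)"
    by (rule choice[THEN exE])
  have "\<forall>m. \<exists>k. m \<le> b k"
    using strict_mono_imp_increasing[OF mono_b] by blast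
  then obtain nK where nK: "\<forall>m. m \<le> b (nK m)"
    by (rule choice[THEN exE])
  define g where "g = rec_nat (nG 0) (\<lambda>_ n. nG (b (Suc (nK (a (Suc n))))))"
  define k where "k i = nK (a (Suc (g i)))" for i
  have g_Suc: "g (Suc i) = nG (b (Suc (k i)))" for i
    by (simp add: g_def k_def)
  show thesis
  proof (rule that)
    show "g i \<in> G" for i
      using nG by (cases i) (simp_all add: g_def)
    show "a (Suc (g i)) \<le> b (k i)" for i
      using nK by (simp add: k_def)
    show "b (Suc (k i)) \<le> a (g (Suc i))" for i
      using nG by (simp add: g_Suc)
  qed
qed

context
  fixes a b g k :: "nat \<Rightarrow> nat"
  assumes mono_a: "strict_mono a" and mono_b: "strict_mono b"
    and chosen_before_coding: "\<And>i. a (Suc (g i)) \<le> b (k i)"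
    and coding_before_chosen: "\<And>i. b (Suc (k i)) \<le> a (g (Suc i))"
begin

lemma chosen_gap: "Suc (g i) < g (Suc i)"
proof -
  have "a (Suc (g i)) < a (g (Suc i))"
    using chosen_before_coding[of i] coding_before_chosen[of i]
      strict_monoD[OF mono_b, of "k i" "Suc (k i)"] by linarith
  then show ?thesis
    using strict_mono_less[OF mono_a] by blast
qed

lemma strict_mono_chosen: "strict_mono g"
  unfolding strict_mono_Suc_iff using chosen_gap Suc_lessD by blast

lemma strict_mono_coding: "strict_mono k"
  unfolding strict_mono_Suc_iff
proof
  fix i
  have "b (k i) < b (Suc (k i))" "a (g (Suc i)) < a (Suc (g (Suc i)))"
    using mono_a mono_b by (simp_all add: strict_mono_less)
  then have "b (k i) < b (k (Suc i))"
    using chosen_before_coding[of "Suc i"] coding_before_chosen[of i] by linarith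
  then show "k i < k (Suc i)"
    using strict_mono_less[OF mono_b] by blast
qed

lemma chosen_coding_disjoint:
  assumes "p \<in> {a (g i)..<a (Suc (g i))}" and "p \<in> {b (k j)..<b (Suc (k j))}"
  shows False
proof (cases "i \<le> j")
  case True
  then have "b (k i) \<le> b (k j)"
    using mono_b strict_mono_coding by (simp add: strict_mono_less_eq)
  then show False
    using chosen_before_coding[of i] assms by auto
next
  case False
  then have "a (g (Suc j)) \<le> a (g i)"
    using mono_a strict_mono_chosen by (simp add: strict_mono_less_eq)
  then show False
    using coding_before_chosen[of j] assms by auto
qed

lemma next_block_not_chosen:
  assumes "p \<in> {a (Suc (g i))..<a (Suc (Suc (g i)))}" and "p \<in> {a (g j)..<a (Suc (g j))}"
  shows False
proof -
  have "g j = Suc (g i)"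
    using strict_mono_block_unique[OF mono_a assms(2,1)] .
  moreover have "g j \<le> g i \<or> g (Suc i) \<le> g j"
    using strict_mono_less_eq[OF strict_mono_chosen, of j i]
      strict_mono_less_eq[OF strict_mono_chosen, of "Suc i" j] by linarith
  ultimately show False
    using chosen_gap[of i] by linarith
qed

definition code :: "(nat \<Rightarrow> bool) \<Rightarrow> (nat \<Rightarrow> bool) \<Rightarrow> (nat \<Rightarrow> bool) \<Rightarrow> nat \<Rightarrow> bool" where
  "code x y f p =
    (if \<exists>i. p \<in> {a (g i)..<a (Suc (g i))} then x p
     else if \<exists>i. p = b (k i) then (\<exists>i. p = b (k i) \<and> f i)
     else \<not> y p)"

lemma code_chosen: "p \<in> {a (g i)..<a (Suc (g i))} \<Longrightarrow> code x y f p = x p"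
  unfolding code_def by auto

lemma code_unchosen:
  "(\<And>i. p \<notin> {a (g i)..<a (Suc (g i))}) \<Longrightarrow> (\<And>i. p \<noteq> b (k i)) \<Longrightarrow> code x y f p = (\<not> y p)"
  unfolding code_def by auto

lemma code_coding_point: "code x y f (b (k j)) = f j"
proof -
  have "b (k j) \<in> {b (k j)..<b (Suc (k j))}"
    using mono_b by (simp add: strict_mono_less)
  then have "b (k j) \<notin> {a (g i)..<a (Suc (g i))}" for i
    using chosen_coding_disjoint by blast
  moreover have "b (k i) = b (k j) \<longleftrightarrow> i = j" for i
    using mono_b strict_mono_coding by (simp add: strict_mono_eq)
  ultimately show ?thesis
    unfolding code_def by auto
qed

lemma inj_code: "inj (code x y)"
proof (rule injI)
  fix f f' assume "code x y f = code x y f'"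
  then have "f j = f' j" for j
    using code_coding_point by metis
  then show "f = f'" ..
qed

lemma coding_point_in_block: "b (k i) \<in> {b kk..<b (Suc kk)} \<Longrightarrow> k i = kk"
  using strict_mono_block_unique[OF mono_b, of "b (k i)" "k i" kk] mono_b
  by (simp add: strict_mono_less)

lemma code_mismatch_coding_block:
  assumes "Suc (b (k j)) < b (Suc (k j))"
  shows "\<exists>p\<in>{b (k j)..<b (Suc (k j))}. y p \<noteq> code x y f p"
proof
  define p where "p = b (Suc (k j)) - 1"
  show p_in: "p \<in> {b (k j)..<b (Suc (k j))}"
    using assms by (simp add: p_def)
  have "p \<noteq> b (k i)" for i
    using coding_point_in_block[of i "k j"] assms p_def by fastforce
  then have "code x y f p = (\<not> y p)"
    using chosen_coding_disjoint p_in by (intro code_unchosen) blast+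
  then show "y p \<noteq> code x y f p" by simp
qed

lemma code_mismatch_other_block:
  assumes "kk \<notin> range k"
    and good: "\<And>i. {b kk..<b (Suc kk)} \<subseteq> {a (g i)..<a (Suc (g i))}
      \<Longrightarrow> \<exists>p\<in>{b kk..<b (Suc kk)}. x p \<noteq> y p"
  shows "\<exists>p\<in>{b kk..<b (Suc kk)}. y p \<noteq> code x y f p"
proof -
  have not_coding: "p \<noteq> b (k i)" if "p \<in> {b kk..<b (Suc kk)}" for p i
    using coding_point_in_block[of i kk] assms(1) that by auto
  have first: "b kk \<in> {b kk..<b (Suc kk)}"
    using mono_b by (simp add: strict_mono_less)
  show ?thesis
  proof (cases "\<exists>i. b kk \<in> {a (g i)..<a (Suc (g i))}")
    case False
    then have "code x y f (b kk) = (\<not> y (b kk))"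
      using first not_coding by (intro code_unchosen) blast+
    then show ?thesis
      using first by force
  next
    case True
    then obtain i where i: "b kk \<in> {a (g i)..<a (Suc (g i))}" by blast
    show ?thesis
    proof (cases "b (Suc kk) \<le> a (Suc (g i))")
      case True
      then have "{b kk..<b (Suc kk)} \<subseteq> {a (g i)..<a (Suc (g i))}"
        using i by auto
      then obtain p where "p \<in> {b kk..<b (Suc kk)}" "x p \<noteq> y p"
        using good by blast
      moreover have "p \<in> {a (g i)..<a (Suc (g i))}"
        using calculation(1) i True by auto
      ultimately show ?thesis
        using code_chosen by metis
    next
      case False
      define p where "p = a (Suc (g i))"
      have "p \<in> {a (Suc (g i))..<a (Suc (Suc (g i)))}"
        using mono_a by (simp add: p_def strict_mono_less)
      then have "p \<notin> {a (g j)..<a (Suc (g j))}" for j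
        using next_block_not_chosen by blast
      moreover have "p \<in> {b kk..<b (Suc kk)}"
        using i False by (simp add: p_def)
      ultimately have "code x y f p = (\<not> y p)"
        using not_coding by (intro code_unchosen) blast+
      then show ?thesis
        using \<open>p \<in> {b kk..<b (Suc kk)}\<close> by force
    qed
  qed
qed

lemma UNIV_lepoll_Match_diff:
  assumes wide: "\<And>kk. Suc (b kk) < b (Suc kk)"
    and good: "\<And>i kk. {b kk..<b (Suc kk)} \<subseteq> {a (g i)..<a (Suc (g i))}
      \<Longrightarrow> \<exists>p\<in>{b kk..<b (Suc kk)}. x p \<noteq> y p"
  shows "(UNIV :: (nat \<Rightarrow> bool) set)
    \<lesssim> Match x (\<lambda>n. {a n..<a (Suc n)}) - Match y (\<lambda>kk. {b kk..<b (Suc kk)})"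
proof -
  have "code x y f \<in> Match x (\<lambda>n. {a n..<a (Suc n)})" for f
  proof -
    have "range g \<subseteq> {n. \<forall>p\<in>{a n..<a (Suc n)}. x p = code x y f p}"
      using code_chosen by auto
    moreover have "infinite (range g)"
      using strict_mono_chosen by (simp add: range_inj_infinite strict_mono_imp_inj_on)
    ultimately show ?thesis
      unfolding Match_def using infinite_super by blast
  qed
  moreover have "code x y f \<notin> Match y (\<lambda>kk. {b kk..<b (Suc kk)})" for f
  proof -
    have "\<exists>p\<in>{b kk..<b (Suc kk)}. y p \<noteq> code x y f p" for kk
      using code_mismatch_coding_block[OF wide] code_mismatch_other_block[OF _ good]
      by (cases "kk \<in> range k") auto
    then have no_match: "{kk. \<forall>p\<in>{b kk..<b (Suc kk)}. y p = code x y f p} = {}"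
      by blast
    show ?thesis
      unfolding Match_def mem_Collect_eq no_match by simp
  qed
  ultimately show ?thesis
    unfolding lepoll_def using inj_code by blast
qed

end

lemma Match_diff_eqpoll_UNIV_if_infinite_disagreement_blocks:
  assumes "interval_partition I" and "interval_partition J" and "\<And>k. card (J k) \<ge> 2"
    and "infinite (disagreement_blocks x y I J)"
  shows "Match x I - Match y J \<approx> (UNIV :: (nat \<Rightarrow> bool) set)"
proof -
  obtain a where mono_a: "strict_mono a" and I: "I = (\<lambda>n. {a n..<a (Suc n)})"
    using assms(1) by (rule interval_partitionE)
  obtain b where mono_b: "strict_mono b" and J: "J = (\<lambda>k. {b k..<b (Suc k)})"
    using assms(2) by (rule interval_partitionE)
  have wide: "Suc (b k) < b (Suc k)" for k
    using assms(3)[of k] J by simp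
  obtain g k where good: "\<And>i. g i \<in> disagreement_blocks x y I J"
    and before: "\<And>i. a (Suc (g i)) \<le> b (k i)" and after: "\<And>i. b (Suc (k i)) \<le> a (g (Suc i))"
    using interleaved_subsequences[OF mono_a mono_b assms(4)] by blast
  have "\<exists>p\<in>{b kk..<b (Suc kk)}. x p \<noteq> y p"
    if "{b kk..<b (Suc kk)} \<subseteq> {a (g i)..<a (Suc (g i))}" for i kk
    using good[of i] that unfolding disagreement_blocks_def I J by blast
  then have "(UNIV :: (nat \<Rightarrow> bool) set) \<lesssim> Match x I - Match y J"
    unfolding I J
    by (rule UNIV_lepoll_Match_diff[where a = a and b = b and g = g and k = k,
          OF mono_a mono_b before after wide])
  then show ?thesis
    by (simp add: lepoll_antisym subset_imp_lepoll)
qed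

theorem mainTheorem13:
  fixes I J :: "nat \<Rightarrow> nat set" and x y :: "nat \<Rightarrow> bool"
  assumes "interval_partition I" and "interval_partition J"
    and "\<And>k. card (J k) \<ge> 2"
  shows "(\<not> Match x I \<subseteq> Match y J
            \<longleftrightarrow> Match x I - Match y J \<approx> (UNIV :: (nat \<Rightarrow> bool) set))
       \<and> (\<not> Match x I \<subseteq> Match y J
            \<longleftrightarrow> infinite {n. \<forall>k. \<not> J k \<subseteq> I n \<or> (\<exists>i\<in>J k. x i \<noteq> y i)})"
proof -
  have "J k \<noteq> {}" for k
    using assms(3)[of k] by auto
  then have "finite (disagreement_blocks x y I J) \<Longrightarrow> Match x I \<subseteq> Match y J"
    using Match_subset_if_finite_disagreement_blocks
      interval_partition_disjoint_family[OF assms(1)] by blast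
  moreover have "infinite (disagreement_blocks x y I J)
      \<Longrightarrow> Match x I - Match y J \<approx> (UNIV :: (nat \<Rightarrow> bool) set)"
    by (rule Match_diff_eqpoll_UNIV_if_infinite_disagreement_blocks[OF assms])
  moreover have "\<not> Match x I \<subseteq> Match y J"
    if "Match x I - Match y J \<approx> (UNIV :: (nat \<Rightarrow> bool) set)"
    using that by (metis Diff_eq_empty_iff UNIV_not_empty eqpoll_empty_iff_empty eqpoll_sym)
  ultimately show ?thesis
    unfolding disagreement_blocks_def by blast
qed

end
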